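(* Let $c\in\{1,\dots,C\}$, $\widehat x_c\in\mathcal X$, $w\in\mathcal W$, $\widehat\theta_c\in\Theta$ and $\rho_c\ge0$. Then \[\sup_{\mathbb Q\in\mathbb B_{Y|\widehat x_c}}\mathbb E_{\mathbb Q}[\ell_\lambda(\widehat x_c,Y,w)]=\inf_{\gamma>0}\Big\{\gamma\big(\rho_c-\Psi(\widehat\theta_c)\big)+\gamma\,\Psi\big(\widehat\theta_c-\gamma^{-1}\lambda(w,\widehat x_c)\big)+\Psi\big(\lambda(w,\widehat x_c)\big)\Big\},\] and the function of $\gamma$ being minimized on the right is convex on $(0,\infty)$.
   Context: Exponential family: $\nu$ a measure on $\mathcal Y\subseteq\mathbb R^m$, $h\ge0$, $T:\mathcal Y\to\mathbb R^p$; $f(y|\theta)=h(y)\exp(\langle\theta,T(y)\rangle-\Psi(\theta))$ density w.r.t. $\nu$, $\Theta=\{\theta\in\mathbb R^p:\int he^{\langle\theta,T\rangle}d\nu<\infty\}$, $\Psi(\theta)=\log\int h e^{\langle\theta,T\rangle}d\nu$ (so $\Psi=+\infty$ outside $\Theta$); the family is regular ($\Theta$ open, $T_1,\dots,T_p$ affinely independent). $\mathcal X\subseteq\mathbb R^n$, $\mathcal W$ a finite-dimensional set, $\lambda:\mathcal W\times\mathcal X\to\Theta$ jointly continuous. Log-loss: $\ell_\lambda(x,y,w)=\Psi(\lambda(w,x))-\langle T(y),\lambda(w,x)\rangle$. KL divergence $\mathrm{KL}(\mathbb P_1\|\mathbb P_2)=\mathbb E_{\mathbb P_1}[\log d\mathbb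 P_1/d\mathbb P_2]$. Conditional ambiguity set: $\mathbb B_{Y|\widehat x_c}$ is the set of distributions on $\mathcal Y$ with density $f(\cdot|\theta)$ for some $\theta\in\Theta$ with $\mathrm{KL}(f(\cdot|\theta)\|f(\cdot|\widehat\theta_c))\le\rho_c$. *)

theory Defs
  imports "HOL-Probability.Probability"
begin

definition expfam_Theta :: "'y measure \<Rightarrow> ('y \<Rightarrow> real) \<Rightarrow> ('y \<Rightarrow> 'p::real_inner) \<Rightarrow> 'p set" where
  "expfam_Theta nu h T =
     {\<theta>. (\<integral>\<^sup>+ y. ennreal (h y * exp (inner \<theta> (T y))) \<partial>nu) < \<infinity>}"

definition expfam_Psi :: "'y measure \<Rightarrow> ('y \<Rightarrow> real) \<Rightarrow> ('y \<Rightarrow> 'p::real_inner) \<Rightarrow> 'p \<Rightarrow> ereal" where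
  "expfam_Psi nu h T \<theta> =
     (if \<theta> \<in> expfam_Theta nu h T
      then ereal (ln (enn2real (\<integral>\<^sup>+ y. ennreal (h y * exp (inner \<theta> (T y))) \<partial>nu)))
      else \<infinity>)"

definition expfam_density :: "'y measure \<Rightarrow> ('y \<Rightarrow> real) \<Rightarrow> ('y \<Rightarrow> 'p::real_inner) \<Rightarrow> 'p \<Rightarrow> 'y \<Rightarrow> real" where
  "expfam_density nu h T \<theta> y =
     h y * exp (inner \<theta> (T y) - real_of_ereal (expfam_Psi nu h T \<theta>))"

definition expfam_dist :: "'y measure \<Rightarrow> ('y \<Rightarrow> real) \<Rightarrow> ('y \<Rightarrow> 'p::real_inner) \<Rightarrow> 'p \<Rightarrow> 'y measure" where
  "expfam_dist nu h T \<theta> = density nu (\<lambda>y. ennreal (expfam_density nu h T \<theta> y))"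

text \<open>Regular family: Theta open and T_1,...,T_p affinely independent, i.e. no nontrivial
  affine relation <a,T(y)> = b holds almost everywhere w.r.t. the base measure h nu.\<close>
definition expfam_regular :: "'y measure \<Rightarrow> ('y \<Rightarrow> real) \<Rightarrow> ('y \<Rightarrow> 'p::real_inner) \<Rightarrow> bool" where
  "expfam_regular nu h T \<longleftrightarrow>
     open (expfam_Theta nu h T) \<and>
     (\<forall>a b. (AE y in density nu (\<lambda>y. ennreal (h y)). inner a (T y) = b) \<longrightarrow> a = 0)"

definition expfam_logloss :: "'y measure \<Rightarrow> ('y \<Rightarrow> real) \<Rightarrow> ('y \<Rightarrow> 'p::real_inner)
    \<Rightarrow> ('w \<Rightarrow> 'x \<Rightarrow> 'p) \<Rightarrow> 'x \<Rightarrow> 'y \<Rightarrow> 'w \<Rightarrow> real" where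
  "expfam_logloss nu h T lam x y w =
     real_of_ereal (expfam_Psi nu h T (lam w x)) - inner (T y) (lam w x)"

text \<open>KL(P1 || P2) = E_P1[log dP1/dP2] (natural log); the library's KL_divergence b M N
  is the divergence of N from M.\<close>
definition KL :: "'y measure \<Rightarrow> 'y measure \<Rightarrow> real" where
  "KL P1 P2 = KL_divergence (exp 1) P2 P1"

definition cond_ambiguity_set :: "'y measure \<Rightarrow> ('y \<Rightarrow> real) \<Rightarrow> ('y \<Rightarrow> 'p::real_inner)
    \<Rightarrow> 'p \<Rightarrow> real \<Rightarrow> 'y measure set" where
  "cond_ambiguity_set nu h T thetahat rho =
     {expfam_dist nu h T \<theta> | \<theta>. \<theta> \<in> expfam_Theta nu h T \<and>
        KL (expfam_dist nu h T \<theta>) (expfam_dist nu h T thetahat) \<le> rho}"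

definition convex_on_ereal :: "real set \<Rightarrow> (real \<Rightarrow> ereal) \<Rightarrow> bool" where
  "convex_on_ereal S f \<longleftrightarrow> convex S \<and>
     (\<forall>x\<in>S. \<forall>y\<in>S. \<forall>t\<in>{0..1}.
        f ((1 - t) * x + t * y) \<le> ereal (1 - t) * f x + ereal t * f y)"

end

(*
  Write \<theta>0 for the centre, \<lambda> for \<lambda>(w, x_c) and Z = exp \<circ> \<Psi> for the partition function.
  ln Z is convex with gradient inequality ln Z(\<theta>') \<ge> ln Z(\<theta>) + E_\<theta><\<theta>' - \<theta>, T>, and
  KL(\<theta> || \<theta>0) = E_\<theta><\<theta> - \<theta>0, T> - ln Z(\<theta>) + ln Z(\<theta>0). Weak duality (sup \<le> inf) is the
  gradient inequality at \<theta> towards \<theta>0 - \<lambda>/\<gamma>, added to \<gamma> times the KL constraint.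

  For the converse, restrict to the ray \<theta>0 - t\<lambda>, t \<ge> 0. With K(t) = \<Psi>(\<theta>0 - t\<lambda>) - \<Psi>(\<theta>0) and
  its continuous derivative m(t) = E_{\<theta>0 - t\<lambda>}<-\<lambda>, T>, the model at t has expected loss
  \<Psi>(\<lambda>) + m(t) and KL divergence t m(t) - K(t) from \<theta>0, while the dual objective at \<gamma> = 1/t
  is \<gamma>\<rho> + \<gamma>K(1/\<gamma>) + \<Psi>(\<lambda>) \<le> \<rho>/t + m(t) + \<Psi>(\<lambda>). If the divergence reaches \<rho> at some t > 0
  the two sides agree there; if \<rho> = 0 let t \<rightarrow> 0; otherwise the divergence stays below \<rho>,
  which bounds K on bounded parts of the ray, so by Fatou and the openness of \<Theta> the whole ray
  lies in \<Theta>, and t \<rightarrow> \<infinity> closes the gap. Convexity in \<gamma> is convexity of the perspective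
  \<gamma>\<Psi>(\<theta>0 - \<lambda>/\<gamma>) of \<Psi>.
*)

theory Submission
  imports Defs
begin

lemma ereal_le_of_le_add_divide:
  fixes c c' :: ereal and \<rho> :: real
  assumes "0 \<le> \<rho>" and le: "\<And>s. 0 < s \<Longrightarrow> c' \<le> ereal (\<rho> / s) + c"
  shows "c' \<le> c"
proof (rule ereal_le_epsilon2)
  fix e :: real
  assume "0 < e"
  have "0 < (\<rho> + 1) / e"
    using \<open>0 < e\<close> \<open>0 \<le> \<rho>\<close> by simp
  then have "c' \<le> ereal (\<rho> / ((\<rho> + 1) / e)) + c"
    by (rule le)
  also have "\<rho> / ((\<rho> + 1) / e) \<le> e"
    using \<open>0 < e\<close> \<open>0 \<le> \<rho>\<close> by (simp add: field_simps)
  then have "ereal (\<rho> / ((\<rho> + 1) / e)) + c \<le> ereal e + c"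
    by (intro add_right_mono) simp
  finally show "c' \<le> c + ereal e"
    by (simp add: add.commute)
qed

(* The one-dimensional problem: K(t) = \<Psi>(\<theta>0 + t d) - \<Psi>(\<theta>0) on R = {t. \<theta>0 + t d \<in> \<Theta>},
   m = K'; closed_dom is what Fatou's lemma gives at a finite end point of R. *)
locale closed_convex_line_fun =
  fixes R :: "real set" and K m :: "real \<Rightarrow> real"
  assumes open_dom: "open R" and convex_dom: "convex R" and zero_in_dom: "0 \<in> R"
    and K_zero: "K 0 = 0"
    and subgradient: "\<And>s t. s \<in> R \<Longrightarrow> t \<in> R \<Longrightarrow> K t + (s - t) * m t \<le> K s"
    and continuous_m: "continuous_on R m" and continuous_K: "continuous_on R K"
    and closed_dom: "\<And>t' B. 0 < t' \<Longrightarrow> (\<And>t. 0 \<le> t \<Longrightarrow> t < t' \<Longrightarrow> t \<in> R \<and> K t \<le> B) \<Longrightarrow> t' \<in> R"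
begin

lemma K_le_mult_m: "t \<in> R \<Longrightarrow> K t \<le> t * m t"
  using subgradient[OF zero_in_dom] K_zero by (simp add: algebra_simps)

lemma K_bounded_if_gap_bounded:
  assumes t0: "t0 \<in> R" "0 < t0" and t: "t \<in> R" "0 \<le> t" "t \<le> ts"
    and gap: "t * m t - K t \<le> \<rho>" and "0 \<le> \<rho>" "0 \<le> ts"
  shows "K t \<le> ts * (\<bar>K t0\<bar> + \<rho>) / t0"
proof -
  have at_t0: "t * (K t + (t0 - t) * m t) \<le> t * K t0"
    using subgradient[OF t0(1) t(1)] t(2) by (rule mult_left_mono)
  have "t0 * K t \<le> t * K t0 + ts * \<rho>"
  proof (cases "t \<le> t0")
    case True
    have "(t0 - t) * K t \<le> (t0 - t) * (t * m t)"
      using K_le_mult_m[OF t(1)] True by (intro mult_left_mono) auto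
    then have "t0 * K t \<le> t * K t0"
      using at_t0 by (simp add: algebra_simps)
    then show ?thesis
      using \<open>0 \<le> \<rho>\<close> \<open>0 \<le> ts\<close> by (smt (verit) mult_nonneg_nonneg)
  next
    case False
    have "(t - t0) * (t * m t) \<le> (t - t0) * (\<rho> + K t)"
      using gap False by (intro mult_left_mono) auto
    then have "t0 * K t \<le> t * K t0 + (t - t0) * \<rho>"
      using at_t0 by (simp add: algebra_simps)
    moreover have "(t - t0) * \<rho> \<le> ts * \<rho>"
      using \<open>0 \<le> \<rho>\<close> t t0 by (intro mult_right_mono) auto
    ultimately show ?thesis by linarith
  qed
  also have "t * K t0 \<le> ts * \<bar>K t0\<bar>"
    using t mult_left_mono[OF abs_ge_self[of "K t0"], of t] mult_right_mono[OF \<open>t \<le> ts\<close>, of "\<bar>K t0\<bar>"]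
    by simp
  then have "t * K t0 + ts * \<rho> \<le> ts * (\<bar>K t0\<bar> + \<rho>)"
    by (simp add: distrib_left)
  finally show ?thesis
    using t0(2) by (simp add: pos_le_divide_eq mult.commute)
qed

lemma nonneg_in_dom_if_gap_bounded:
  assumes "0 \<le> \<rho>" and gap: "\<And>t. t \<in> R \<Longrightarrow> 0 \<le> t \<Longrightarrow> t * m t - K t \<le> \<rho>"
  shows "{0..} \<subseteq> R"
proof (rule ccontr)
  define S where "S = {0..} - R"
  assume "\<not> {0..} \<subseteq> R"
  then have "S \<noteq> {}" unfolding S_def by auto
  moreover have "closed S" "bdd_below S"
    unfolding S_def using open_dom by (auto intro: closed_Diff bdd_belowI[of _ 0])
  ultimately have "Inf S \<in> S"
    by (intro closed_contains_Inf)
  define ts where "ts = Inf S"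
  with \<open>Inf S \<in> S\<close> have "ts \<in> S" by simp
  have below: "t \<in> R" if "0 \<le> t" "t < ts" for t
    using cInf_lower[of t S] \<open>bdd_below S\<close> that unfolding ts_def S_def by force
  have "ts \<noteq> 0"
    using \<open>ts \<in> S\<close> zero_in_dom unfolding S_def by auto
  then have "0 < ts"
    using \<open>ts \<in> S\<close> unfolding S_def by auto
  define t0 where "t0 = ts / 2"
  have t0: "t0 \<in> R" "0 < t0"
    using below \<open>0 < ts\<close> unfolding t0_def by auto
  have "ts \<in> R"
  proof (rule closed_dom[OF \<open>0 < ts\<close>])
    fix t assume "0 \<le> t" "t < ts"
    then show "t \<in> R \<and> K t \<le> ts * (\<bar>K t0\<bar> + \<rho>) / t0"
      using below K_bounded_if_gap_bounded[OF t0] gap \<open>0 \<le> \<rho>\<close> by simp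
  qed
  then show False
    using \<open>ts \<in> S\<close> unfolding S_def by simp
qed

lemma gap_crossing:
  assumes "t' \<in> R" "0 \<le> t'" "\<rho> \<le> t' * m t' - K t'" "0 \<le> \<rho>"
  shows "\<exists>t\<in>R. 0 \<le> t \<and> t * m t - K t = \<rho>"
proof -
  have seg: "{0..t'} \<subseteq> R"
    using convex_dom zero_in_dom assms(1,2)
    by (metis closed_segment_eq_real_ivl convex_contains_segment)
  have "continuous_on {0..t'} (\<lambda>t. t * m t - K t)"
    using seg continuous_m continuous_K
    by (intro continuous_intros) (auto elim: continuous_on_subset)
  then obtain t where "0 \<le> t" "t \<le> t'" "t * m t - K t = \<rho>"
    using IVT'[of "\<lambda>t. t * m t - K t" 0 \<rho> t'] assms K_zero by auto
  then show ?thesis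
    using seg by auto
qed

lemma le_at_zero_if_le_right:
  assumes le: "\<And>s. s \<in> R \<Longrightarrow> 0 < s \<Longrightarrow> c \<le> ereal (m s + p)"
  shows "c \<le> ereal (m 0 + p)"
proof -
  obtain d where "0 < d" "ball 0 d \<subseteq> R"
    using open_dom zero_in_dom open_contains_ball by blast
  then have "eventually (\<lambda>s. s \<in> R \<and> 0 < s) (at_right 0)"
    by (auto simp: eventually_at_right_field dist_real_def intro!: exI[of _ d])
  then have "eventually (\<lambda>s. c \<le> ereal (m s + p)) (at_right 0)"
    by eventually_elim (use le in auto)
  moreover have "isCont m 0"
    using continuous_m open_dom zero_in_dom continuous_on_eq_continuous_at by blast
  then have "((\<lambda>s. ereal (m s + p)) \<longlongrightarrow> ereal (m 0 + p)) (at_right 0)"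
    by (intro tendsto_intros) (auto simp: isCont_def filterlim_at_split)
  ultimately show ?thesis
    by (intro tendsto_le[OF _ _ tendsto_const]) auto
qed

lemma dual_bound_at_inverse:
  fixes \<rho> p :: real and c' :: ereal
  assumes dual: "\<And>\<gamma>. 0 < \<gamma> \<Longrightarrow> 1 / \<gamma> \<in> R \<Longrightarrow> c' \<le> ereal (\<gamma> * \<rho> + \<gamma> * K (1 / \<gamma>) + p)"
    and "s \<in> R" "0 < s"
  shows "c' \<le> ereal (\<rho> / s) + ereal (m s + p)"
proof -
  have "c' \<le> ereal ((1 / s) * \<rho> + (1 / s) * K s + p)"
    using dual[of "1 / s"] assms(2,3) by simp
  also have "(1 / s) * \<rho> + (1 / s) * K s + p \<le> \<rho> / s + (m s + p)"
    using K_le_mult_m[OF \<open>s \<in> R\<close>] \<open>0 < s\<close> by (simp add: field_simps)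
  finally show ?thesis by simp
qed

theorem inf_dual_le_sup_primal:
  fixes \<rho> p :: real and c c' :: ereal
  assumes "0 \<le> \<rho>"
    and primal: "\<And>t. t \<in> R \<Longrightarrow> 0 \<le> t \<Longrightarrow> t * m t - K t \<le> \<rho> \<Longrightarrow> ereal (m t + p) \<le> c"
    and dual: "\<And>\<gamma>. 0 < \<gamma> \<Longrightarrow> 1 / \<gamma> \<in> R \<Longrightarrow> c' \<le> ereal (\<gamma> * \<rho> + \<gamma> * K (1 / \<gamma>) + p)"
  shows "c' \<le> c"
proof -
  have dual_at: "c' \<le> ereal (\<rho> / s) + ereal (m s + p)" if "s \<in> R" "0 < s" for s
    using dual that by (rule dual_bound_at_inverse)
  consider (zero) "\<rho> = 0"
    | (crossing) t where "t \<in> R" "0 < t" "t * m t - K t = \<rho>"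
    | (never) "\<And>t. t \<in> R \<Longrightarrow> 0 \<le> t \<Longrightarrow> t * m t - K t \<le> \<rho>"
    by (metis K_zero gap_crossing \<open>0 \<le> \<rho>\<close> mult_zero_left diff_zero less_eq_real_def not_le)
  then show ?thesis
  proof cases
    case zero
    have "c' \<le> ereal (m 0 + p)"
      using dual_at zero by (intro le_at_zero_if_le_right) auto
    also have "\<dots> \<le> c"
      using primal[OF zero_in_dom] K_zero zero by simp
    finally show ?thesis .
  next
    case crossing
    have "c' \<le> ereal ((1 / t) * \<rho> + (1 / t) * K t + p)"
      using dual[of "1 / t"] crossing by simp
    also have "(1 / t) * \<rho> + (1 / t) * K t + p = m t + p"
      using crossing by (simp add: field_simps)
    also have "ereal (m t + p) \<le> c"
      using primal crossing by simp
    finally show ?thesis .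
  next
    case never
    then have "{0..} \<subseteq> R"
      using nonneg_in_dom_if_gap_bounded \<open>0 \<le> \<rho>\<close> by blast
    show ?thesis
    proof (rule ereal_le_of_le_add_divide[OF \<open>0 \<le> \<rho>\<close>])
      fix s :: real assume "0 < s"
      then have "s \<in> R" using \<open>{0..} \<subseteq> R\<close> by auto
      then show "c' \<le> ereal (\<rho> / s) + c"
        using dual_at[OF _ \<open>0 < s\<close>] primal[OF _ _ never] \<open>0 < s\<close>
        by (meson add_left_mono less_imp_le order_trans)
    qed
  qed
qed

end

lemma abs_mult_exp_le:
  fixes x a e :: real
  assumes "0 < e"
  shows "\<bar>x\<bar> * exp a \<le> (exp (a + e * x) + exp (a - e * x)) / e"
proof -
  have "e * \<bar>x\<bar> \<le> exp (e * \<bar>x\<bar>)"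
    using exp_ge_add_one_self[of "e * \<bar>x\<bar>"] by linarith
  also have "\<dots> \<le> exp (e * x) + exp (- (e * x))"
    by (cases "0 \<le> x") (simp_all add: add_increasing add_increasing2)
  finally have "e * \<bar>x\<bar> * exp a \<le> (exp (e * x) + exp (- (e * x))) * exp a"
    by (intro mult_right_mono) auto
  then show ?thesis
    using assms by (simp add: field_simps exp_add exp_diff exp_minus)
qed

lemma exp_mult_le_endpoints:
  fixes a t b x :: real
  assumes "a \<le> t" "t \<le> b"
  shows "exp (t * x) \<le> exp (a * x) + exp (b * x)"
proof (cases "0 \<le> x")
  case True
  then have "exp (t * x) \<le> exp (b * x)"
    using assms by (simp add: mult_right_mono)
  then show ?thesis by (smt (verit) exp_gt_zero)
next
  case False
  then have "exp (t * x) \<le> exp (a * x)"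
    using assms by (simp add: mult_right_mono_neg)
  then show ?thesis by (smt (verit) exp_gt_zero)
qed

lemma isCont_integral_dominated:
  fixes f :: "real \<Rightarrow> 'a \<Rightarrow> real"
  assumes "0 < e" and meas: "\<And>t. f t \<in> borel_measurable M" and "integrable M w"
    and bound: "\<And>t y. \<bar>t - t0\<bar> < e \<Longrightarrow> y \<in> space M \<Longrightarrow> \<bar>f t y\<bar> \<le> w y"
    and cont: "\<And>y. y \<in> space M \<Longrightarrow> isCont (\<lambda>t. f t y) t0"
  shows "isCont (\<lambda>t. \<integral>y. f t y \<partial>M) t0"
proof (rule continuous_at_sequentiallyI)
  fix X :: "nat \<Rightarrow> real"
  assume X: "X \<longlonglongrightarrow> t0"
  then obtain N where N: "\<And>n. n \<ge> N \<Longrightarrow> \<bar>X n - t0\<bar> < e"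
    using \<open>0 < e\<close> unfolding LIMSEQ_iff by (metis real_norm_def)
  have "(\<lambda>n. \<integral>y. f (X (n + N)) y \<partial>M) \<longlonglongrightarrow> (\<integral>y. f t0 y \<partial>M)"
  proof (rule integral_dominated_convergence[where w = w])
    show "AE y in M. (\<lambda>n. f (X (n + N)) y) \<longlonglongrightarrow> f t0 y"
      using cont LIMSEQ_ignore_initial_segment[OF X]
      by (intro AE_I2) (rule isCont_tendsto_compose)
    show "AE y in M. norm (f (X (n + N)) y) \<le> w y" for n
      using bound N by (intro AE_I2) auto
  qed (use meas \<open>integrable M w\<close> in auto)
  then show "(\<lambda>n. \<integral>y. f (X n) y \<partial>M) \<longlonglongrightarrow> (\<integral>y. f t0 y \<partial>M)"
    by (rule LIMSEQ_offset)
qed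

lemma nn_integral_le_of_tendsto_param:
  fixes f :: "real \<Rightarrow> 'a \<Rightarrow> real"
  assumes meas: "\<And>t. f t \<in> borel_measurable M" and X: "X \<longlonglongrightarrow> x"
    and cont: "\<And>y. y \<in> space M \<Longrightarrow> isCont (\<lambda>t. f t y) x"
    and bound: "\<And>n. (\<integral>\<^sup>+ y. ennreal (f (X n) y) \<partial>M) \<le> B"
  shows "(\<integral>\<^sup>+ y. ennreal (f x y) \<partial>M) \<le> B"
proof -
  have "(\<integral>\<^sup>+ y. ennreal (f x y) \<partial>M) = (\<integral>\<^sup>+ y. liminf (\<lambda>n. ennreal (f (X n) y)) \<partial>M)"
  proof (rule nn_integral_cong)
    fix y assume "y \<in> space M"
    then have "(\<lambda>n. ennreal (f (X n) y)) \<longlonglongrightarrow> ennreal (f x y)"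
      using cont X by (intro tendsto_ennrealI) (rule isCont_tendsto_compose)
    then show "ennreal (f x y) = liminf (\<lambda>n. ennreal (f (X n) y))"
      by (simp add: lim_imp_Liminf)
  qed
  also have "\<dots> \<le> liminf (\<lambda>n. \<integral>\<^sup>+ y. ennreal (f (X n) y) \<partial>M)"
    using meas by (intro nn_integral_liminf) simp
  also have "\<dots> \<le> B"
    using bound by (intro Liminf_le) simp_all
  finally show ?thesis .
qed

context
  fixes M :: "'a measure" and g s :: "'a \<Rightarrow> real"
  assumes g_meas [measurable]: "g \<in> borel_measurable M"
    and s_meas [measurable]: "s \<in> borel_measurable M"
    and g_nonneg: "\<And>y. y \<in> space M \<Longrightarrow> 0 \<le> g y"
begin

lemma abs_mult_exp_mult_le:
  assumes "0 < e" "y \<in> space M"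
  shows "\<bar>g y * exp (t * s y) * s y\<bar> \<le> (g y * exp ((t - e) * s y) + g y * exp ((t + e) * s y)) / e"
proof -
  have "\<bar>g y * exp (t * s y) * s y\<bar> = g y * (\<bar>s y\<bar> * exp (t * s y))"
    using g_nonneg[OF \<open>y \<in> space M\<close>] by (simp add: abs_mult)
  also have "\<dots> \<le> g y * ((exp (t * s y + e * s y) + exp (t * s y - e * s y)) / e)"
    using g_nonneg[OF \<open>y \<in> space M\<close>] by (intro mult_left_mono abs_mult_exp_le \<open>0 < e\<close>)
  also have "\<dots> = (g y * exp ((t - e) * s y) + g y * exp ((t + e) * s y)) / e"
    by (simp add: algebra_simps add_divide_distrib)
  finally show ?thesis .
qed

lemma integrable_mult_exp_mult:
  assumes "0 < e"
    and "integrable M (\<lambda>y. g y * exp ((t - e) * s y))" "integrable M (\<lambda>y. g y * exp ((t + e) * s y))"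
  shows "integrable M (\<lambda>y. g y * exp (t * s y) * s y)"
proof (rule Bochner_Integration.integrable_bound)
  show "integrable M (\<lambda>y. (g y * exp ((t - e) * s y) + g y * exp ((t + e) * s y)) / e)"
    using assms by simp
  show "AE y in M. norm (g y * exp (t * s y) * s y)
      \<le> norm ((g y * exp ((t - e) * s y) + g y * exp ((t + e) * s y)) / e)"
  proof (rule AE_I2)
    fix y assume "y \<in> space M"
    from abs_mult_exp_mult_le[OF \<open>0 < e\<close> this, of t]
    show "norm (g y * exp (t * s y) * s y)
        \<le> norm ((g y * exp ((t - e) * s y) + g y * exp ((t + e) * s y)) / e)"
      unfolding real_norm_def by linarith
  qed
qed measurable

lemma mult_exp_le_endpoints:
  assumes "a \<le> t" "t \<le> b" "y \<in> space M"
  shows "g y * exp (t * s y) \<le> g y * exp (a * s y) + g y * exp (b * s y)"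
  using mult_left_mono[OF exp_mult_le_endpoints[OF assms(1,2)] g_nonneg[OF assms(3)]]
  by (simp add: distrib_left)

context
  fixes r t0 :: real
  assumes "0 < r"
    and integrable_near: "\<And>t. \<bar>t - t0\<bar> < r \<Longrightarrow> integrable M (\<lambda>y. g y * exp (t * s y))"
begin

lemma isCont_integral_mult_exp: "isCont (\<lambda>t. \<integral>y. g y * exp (t * s y) \<partial>M) t0"
proof (rule isCont_integral_dominated)
  let ?e = "r / 2"
  show "integrable M (\<lambda>y. g y * exp ((t0 - ?e) * s y) + g y * exp ((t0 + ?e) * s y))"
    using \<open>0 < r\<close> by (intro Bochner_Integration.integrable_add integrable_near) auto
  show "\<bar>g y * exp (t * s y)\<bar> \<le> g y * exp ((t0 - ?e) * s y) + g y * exp ((t0 + ?e) * s y)"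
    if "\<bar>t - t0\<bar> < ?e" "y \<in> space M" for t y
  proof -
    have "t0 - ?e \<le> t" "t \<le> t0 + ?e"
      using that(1) by arith+
    then show ?thesis
      using mult_exp_le_endpoints[of "t0 - ?e" t "t0 + ?e" y] g_nonneg[OF that(2)] that(2) by simp
  qed
qed (use \<open>0 < r\<close> in auto)

lemma isCont_integral_mult_exp_mult: "isCont (\<lambda>t. \<integral>y. g y * exp (t * s y) * s y \<partial>M) t0"
proof (rule isCont_integral_dominated)
  let ?e = "r / 3"
  let ?w = "\<lambda>y. g y * exp ((t0 - 2 * ?e) * s y) + g y * exp ((t0 + 2 * ?e) * s y)"
  show "integrable M (\<lambda>y. 2 * ?w y / ?e)"
    using \<open>0 < r\<close> by (intro integrable_divide_zero integrable_mult_right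
        Bochner_Integration.integrable_add integrable_near) auto
  show "\<bar>g y * exp (t * s y) * s y\<bar> \<le> 2 * ?w y / ?e" if "\<bar>t - t0\<bar> < ?e" "y \<in> space M" for t y
  proof -
    have "t0 - 2 * ?e \<le> t - ?e" "t - ?e \<le> t0 + 2 * ?e" "t0 - 2 * ?e \<le> t + ?e" "t + ?e \<le> t0 + 2 * ?e"
      using that(1) by arith+
    then have "g y * exp ((t - ?e) * s y) \<le> ?w y" "g y * exp ((t + ?e) * s y) \<le> ?w y"
      using mult_exp_le_endpoints[OF _ _ that(2)] by blast+
    then have "(g y * exp ((t - ?e) * s y) + g y * exp ((t + ?e) * s y)) / ?e \<le> 2 * ?w y / ?e"
      using \<open>0 < r\<close> by (intro divide_right_mono) auto
    then show ?thesis
      using abs_mult_exp_mult_le[of ?e y t] \<open>0 < r\<close> that(2) by linarith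
  qed
qed (use \<open>0 < r\<close> in auto)

end

end

lemma KL_density_density_of_integrable:
  fixes f g :: "'a \<Rightarrow> real"
  assumes "1 < b"
    and f [measurable]: "f \<in> borel_measurable M" and f_nonneg: "AE x in M. 0 \<le> f x"
    and "integrable M f"
    and g [measurable]: "g \<in> borel_measurable M" and g_nonneg: "AE x in M. 0 \<le> g x"
    and ac: "AE x in M. f x = 0 \<longrightarrow> g x = 0"
  shows "KL_divergence b (density M f) (density M g) = (\<integral>x. g x * log b (g x / f x) \<partial>M)"
proof -
  interpret Mf: finite_measure "density M f"
  proof
    have "emeasure (density M f) (space (density M f)) = ennreal (\<integral>x. f x \<partial>M)"
      using \<open>integrable M f\<close> f_nonneg
      by (simp add: emeasure_density nn_integral_eq_integral[symmetric] cong: nn_integral_cong)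
    then show "emeasure (density M f) (space (density M f)) \<noteq> \<infinity>"
      by simp
  qed
  have "KL_divergence b (density M f) (density M g) =
      KL_divergence b (density M f) (density (density M f) (\<lambda>x. g x / f x))"
    using f_nonneg g_nonneg ac by (subst density_density_divide) simp_all
  also have "\<dots> = (\<integral>x. (g x / f x) * log b (g x / f x) \<partial>density M f)"
    using f_nonneg g_nonneg \<open>1 < b\<close> by (intro Mf.KL_density) (auto simp: AE_density)
  also have "\<dots> = (\<integral>x. g x * log b (g x / f x) \<partial>M)"
    using ac f_nonneg g_nonneg by (subst integral_density) (auto intro!: integral_cong_AE)
  finally show ?thesis .
qed

lemma convex_line_preimage:
  fixes a d :: "'a::real_vector"
  assumes "convex S"
  shows "convex {t :: real. a + t *\<^sub>R d \<in> S}"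
proof (rule convexI)
  fix x y u w :: real
  assume "x \<in> {t. a + t *\<^sub>R d \<in> S}" "y \<in> {t. a + t *\<^sub>R d \<in> S}" "0 \<le> u" "0 \<le> w" "u + w = 1"
  then have "u *\<^sub>R (a + x *\<^sub>R d) + w *\<^sub>R (a + y *\<^sub>R d) \<in> S"
    using \<open>convex S\<close> by (simp add: convexD)
  moreover have "u *\<^sub>R (a + x *\<^sub>R d) + w *\<^sub>R (a + y *\<^sub>R d) = (u + w) *\<^sub>R a + (u * x + w * y) *\<^sub>R d"
    by (simp add: algebra_simps)
  ultimately show "u *\<^sub>R x + w *\<^sub>R y \<in> {t. a + t *\<^sub>R d \<in> S}"
    using \<open>u + w = 1\<close> by simp
qed

lemma perspective_weights:
  fixes x y \<alpha> \<beta> z u :: real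
  assumes "0 < x" "0 < y" "0 \<le> \<alpha>" "0 \<le> \<beta>" "\<alpha> + \<beta> = 1"
    and z: "z = \<alpha> * x + \<beta> * y" and u: "u = \<beta> * y / z"
  shows "0 < z" "0 \<le> u" "u \<le> 1" "z * u = \<beta> * y" "z * (1 - u) = \<alpha> * x"
    "(1 - u) * (1 / x) + u * (1 / y) = 1 / z"
proof -
  show "0 < z"
    unfolding z using assms by (cases "\<alpha> = 0") (auto intro: add_pos_nonneg)
  moreover have "\<beta> * y \<le> z"
    using assms unfolding z by simp
  ultimately show "0 \<le> u" "u \<le> 1" "z * u = \<beta> * y" "z * (1 - u) = \<alpha> * x"
    using assms unfolding u by (simp_all add: right_diff_distrib z)
  have "(1 - u) * (1 / x) + u * (1 / y) = (z * (1 - u)) / (z * x) + (z * u) / (z * y)"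
    using \<open>0 < x\<close> \<open>0 < y\<close> \<open>0 < z\<close> by simp
  also have "\<dots> = (\<alpha> + \<beta>) / z"
    using \<open>z * u = \<beta> * y\<close> \<open>z * (1 - u) = \<alpha> * x\<close> \<open>0 < x\<close> \<open>0 < y\<close> by (simp add: add_divide_distrib)
  finally show "(1 - u) * (1 / x) + u * (1 / y) = 1 / z"
    using assms by simp
qed

lemma convex_on_perspective:
  fixes f :: "'a::real_vector \<Rightarrow> real" and a v :: 'a
  assumes f: "convex_on S f"
  defines "D \<equiv> {\<gamma>. 0 < \<gamma> \<and> a - (1 / \<gamma>) *\<^sub>R v \<in> S}"
  shows "convex_on D (\<lambda>\<gamma>. \<gamma> * f (a - (1 / \<gamma>) *\<^sub>R v))"
proof -
  have combination: "\<alpha> * x + \<beta> * y \<in> D \<and>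
      (\<alpha> * x + \<beta> * y) * f (a - (1 / (\<alpha> * x + \<beta> * y)) *\<^sub>R v)
        \<le> \<alpha> * (x * f (a - (1 / x) *\<^sub>R v)) + \<beta> * (y * f (a - (1 / y) *\<^sub>R v))"
    if "x \<in> D" "y \<in> D" "0 \<le> \<alpha>" "0 \<le> \<beta>" "\<alpha> + \<beta> = 1" for x y \<alpha> \<beta>
  proof -
    define z where "z = \<alpha> * x + \<beta> * y"
    define u where "u = \<beta> * y / z"
    have "0 < x" "0 < y" using that unfolding D_def by auto
    note u = perspective_weights[OF this that(3-5) z_def u_def]
    have "(1 - u) *\<^sub>R (a - (1 / x) *\<^sub>R v) + u *\<^sub>R (a - (1 / y) *\<^sub>R v)
        = a - ((1 - u) * (1 / x) + u * (1 / y)) *\<^sub>R v"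
      by (simp add: algebra_simps)
    then have comb: "(1 - u) *\<^sub>R (a - (1 / x) *\<^sub>R v) + u *\<^sub>R (a - (1 / y) *\<^sub>R v) = a - (1 / z) *\<^sub>R v"
      using u by simp
    have z_in: "a - (1 / z) *\<^sub>R v \<in> S"
      using comb u convex_onD[OF f] convex_on_imp_convex[OF f] that unfolding D_def
      by (metis (no_types, lifting) convex_alt mem_Collect_eq)
    have "f (a - (1 / z) *\<^sub>R v) \<le> (1 - u) * f (a - (1 / x) *\<^sub>R v) + u * f (a - (1 / y) *\<^sub>R v)"
      using convex_onD[OF f, of u "a - (1 / x) *\<^sub>R v" "a - (1 / y) *\<^sub>R v"] comb u that
      unfolding D_def by simp
    then have "z * f (a - (1 / z) *\<^sub>R v)
        \<le> z * ((1 - u) * f (a - (1 / x) *\<^sub>R v) + u * f (a - (1 / y) *\<^sub>R v))"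
      using u by (intro mult_left_mono) auto
    also have "\<dots> = (z * (1 - u)) * f (a - (1 / x) *\<^sub>R v) + (z * u) * f (a - (1 / y) *\<^sub>R v)"
      by (simp add: algebra_simps)
    also have "\<dots> = \<alpha> * (x * f (a - (1 / x) *\<^sub>R v)) + \<beta> * (y * f (a - (1 / y) *\<^sub>R v))"
      using u by simp
    finally show ?thesis
      using u z_in unfolding z_def D_def by simp
  qed
  show ?thesis
    unfolding convex_on_def convex_def using combination by simp
qed

lemma convex_on_ereal_extend:
  fixes f :: "real \<Rightarrow> ereal"
  assumes "convex S" "D \<subseteq> S" "convex_on D g"
    and on_D: "\<And>x. x \<in> D \<Longrightarrow> f x = ereal (g x)"
    and off_D: "\<And>x. x \<in> S \<Longrightarrow> x \<notin> D \<Longrightarrow> f x = \<infinity>"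
  shows "convex_on_ereal S f"
  unfolding convex_on_ereal_def
proof (intro conjI ballI \<open>convex S\<close>)
  fix x y t :: real
  assume "x \<in> S" "y \<in> S" "t \<in> {0..1}"
  have not_MInf: "f z \<noteq> - \<infinity>" if "z \<in> S" for z
    using on_D off_D that by (cases "z \<in> D") auto
  have "0 \<le> t" "t \<le> 1"
    using \<open>t \<in> {0..1}\<close> by auto
  then have "t = 0 \<or> t = 1 \<or> 0 < t \<and> t < 1"
    by linarith
  then consider "t = 0" | "t = 1" | "0 < t" "t < 1" "x \<in> D" "y \<in> D" | "0 < t" "t < 1" "x \<notin> D \<or> y \<notin> D"
    by blast
  then show "f ((1 - t) * x + t * y) \<le> ereal (1 - t) * f x + ereal t * f y"
  proof cases
    case 3
    then have "(1 - t) * x + t * y \<in> D"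
      using convex_on_imp_convex[OF \<open>convex_on D g\<close>] by (simp add: convex_alt)
    then show ?thesis
      using convex_onD[OF \<open>convex_on D g\<close>, of t x y] 3 on_D by simp
  next
    case 4
    then have "ereal (1 - t) * f x + ereal t * f y = \<infinity>"
      using off_D not_MInf \<open>x \<in> S\<close> \<open>y \<in> S\<close> by (auto simp: ereal_mult_infty)
    then show ?thesis
      by (metis ereal_less_eq(1))
  qed (simp_all add: zero_ereal_def[symmetric])
qed

context
  fixes nu :: "'y measure" and h :: "'y \<Rightarrow> real" and T :: "'y \<Rightarrow> 'p::euclidean_space"
  assumes h_meas [measurable]: "h \<in> borel_measurable nu"
    and h_nonneg: "\<forall>y\<in>space nu. 0 \<le> h y"
    and T_meas [measurable]: "T \<in> borel_measurable nu"
    and regular: "expfam_regular nu h T"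
begin

abbreviation (input) "Theta \<equiv> expfam_Theta nu h T"

definition expfam_Z :: "'p \<Rightarrow> real" where
  "expfam_Z \<theta> = (\<integral>y. h y * exp (inner \<theta> (T y)) \<partial>nu)"

definition expfam_mean :: "'p \<Rightarrow> 'p \<Rightarrow> real" where
  "expfam_mean \<theta> d = (\<integral>y. h y * exp (inner \<theta> (T y)) * inner d (T y) \<partial>nu) / expfam_Z \<theta>"

lemma expfam_weight_line:
  "h y * exp (inner (a + t *\<^sub>R d) (T y)) = h y * exp (inner a (T y)) * exp (t * inner d (T y))"
  by (simp add: inner_add_left exp_add)

lemma mem_expfam_Theta_iff: "\<theta> \<in> Theta \<longleftrightarrow> integrable nu (\<lambda>y. h y * exp (inner \<theta> (T y)))"
proof -
  have "(\<integral>\<^sup>+ y. ennreal (h y * exp (inner \<theta> (T y))) \<partial>nu)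
      = (\<integral>\<^sup>+ y. ennreal (norm (h y * exp (inner \<theta> (T y)))) \<partial>nu)"
    using h_nonneg by (intro nn_integral_cong) auto
  then show ?thesis
    unfolding expfam_Theta_def integrable_iff_bounded by auto
qed

lemma nn_integral_expfam_weight:
  "\<theta> \<in> Theta \<Longrightarrow> (\<integral>\<^sup>+ y. ennreal (h y * exp (inner \<theta> (T y))) \<partial>nu) = ennreal (expfam_Z \<theta>)"
  unfolding expfam_Z_def using h_nonneg
  by (intro nn_integral_eq_integral) (auto simp: mem_expfam_Theta_iff)

lemma expfam_Z_pos:
  assumes "\<theta> \<in> Theta"
  shows "0 < expfam_Z \<theta>"
proof (rule ccontr)
  assume "\<not> 0 < expfam_Z \<theta>"
  moreover have "0 \<le> expfam_Z \<theta>"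
    unfolding expfam_Z_def using h_nonneg by (auto intro!: integral_nonneg_AE)
  ultimately have "expfam_Z \<theta> = 0" by simp
  then have "AE y in nu. h y * exp (inner \<theta> (T y)) = 0"
    using assms h_nonneg unfolding expfam_Z_def mem_expfam_Theta_iff
    by (subst integral_nonneg_eq_0_iff_AE[symmetric]) auto
  then have "AE y in density nu (\<lambda>y. ennreal (h y)). inner a (T y) = 0" for a :: 'p
    by (subst AE_density) (auto elim: AE_mp)
  then have "(a :: 'p) = 0" for a
    using regular unfolding expfam_regular_def by blast
  then show False
    using nonzero_Basis nonempty_Basis by blast
qed

lemma expfam_Psi_eq:
  assumes "\<theta> \<in> Theta"
  shows "expfam_Psi nu h T \<theta> = ereal (ln (expfam_Z \<theta>))"
  unfolding expfam_Psi_def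
  using assms nn_integral_expfam_weight[OF assms] expfam_Z_pos[OF assms] by simp

lemma open_expfam_Theta: "open Theta"
  using regular unfolding expfam_regular_def by blast

lemma open_expfam_line: "open {t :: real. a + t *\<^sub>R d \<in> Theta}"
  using open_expfam_Theta
  by (intro continuous_open_vimage[unfolded vimage_def]) (auto intro!: continuous_intros)

lemma expfam_line_integrable_near:
  assumes "a + t0 *\<^sub>R d \<in> Theta"
  obtains r where "0 < r"
    "\<And>t. \<bar>t - t0\<bar> < r \<Longrightarrow> integrable nu (\<lambda>y. h y * exp (inner a (T y)) * exp (t * inner d (T y)))"
proof -
  obtain r where "0 < r" "ball t0 r \<subseteq> {t. a + t *\<^sub>R d \<in> Theta}"
    using open_expfam_line assms open_contains_ball by blast
  show ?thesis
  proof (rule that[OF \<open>0 < r\<close>])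
    fix t assume "\<bar>t - t0\<bar> < r"
    then have "t \<in> ball t0 r"
      by (simp add: dist_real_def abs_minus_commute)
    then show "integrable nu (\<lambda>y. h y * exp (inner a (T y)) * exp (t * inner d (T y)))"
      using \<open>ball t0 r \<subseteq> _\<close> by (auto simp: mem_expfam_Theta_iff expfam_weight_line)
  qed
qed

lemma integrable_expfam_weight_stat:
  assumes "\<theta> \<in> Theta"
  shows "integrable nu (\<lambda>y. h y * exp (inner \<theta> (T y)) * inner d (T y))"
proof -
  obtain r where "0 < r" and near:
      "\<And>t. \<bar>t - 0\<bar> < r \<Longrightarrow> integrable nu (\<lambda>y. h y * exp (inner \<theta> (T y)) * exp (t * inner d (T y)))"
    using expfam_line_integrable_near[of \<theta> 0 d] assms by auto
  have "integrable nu (\<lambda>y. h y * exp (inner \<theta> (T y)) * exp (0 * inner d (T y)) * inner d (T y))"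
    using h_nonneg \<open>0 < r\<close> by (intro integrable_mult_exp_mult[where e = "r / 2"] near) auto
  then show ?thesis by simp
qed

lemma expfam_density_eq:
  "\<theta> \<in> Theta \<Longrightarrow> expfam_density nu h T \<theta> y = h y * exp (inner \<theta> (T y)) / expfam_Z \<theta>"
  unfolding expfam_density_def using expfam_Z_pos by (simp add: expfam_Psi_eq exp_diff)

lemma measurable_expfam_density [measurable]: "expfam_density nu h T \<theta> \<in> borel_measurable nu"
  unfolding expfam_density_def by measurable

lemma expfam_density_nonneg: "y \<in> space nu \<Longrightarrow> 0 \<le> expfam_density nu h T \<theta> y"
  unfolding expfam_density_def using h_nonneg by auto

lemma integrable_expfam_density:
  assumes "\<theta> \<in> Theta"
  shows "integrable nu (expfam_density nu h T \<theta>)"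
proof -
  have "expfam_density nu h T \<theta> = (\<lambda>y. h y * exp (inner \<theta> (T y)) / expfam_Z \<theta>)"
    using expfam_density_eq[OF assms] by auto
  then show ?thesis
    using assms by (simp add: mem_expfam_Theta_iff)
qed

lemma integral_expfam_dist:
  assumes "\<theta> \<in> Theta" and [measurable]: "\<phi> \<in> borel_measurable nu"
  shows "(\<integral>y. \<phi> y \<partial>expfam_dist nu h T \<theta>)
    = (\<integral>y. h y * exp (inner \<theta> (T y)) * \<phi> y \<partial>nu) / expfam_Z \<theta>"
proof -
  have "(\<integral>y. \<phi> y \<partial>expfam_dist nu h T \<theta>) = (\<integral>y. expfam_density nu h T \<theta> y * \<phi> y \<partial>nu)"
    unfolding expfam_dist_def using expfam_density_nonneg by (subst integral_density) auto
  then show ?thesis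
    using assms by (simp add: expfam_density_eq)
qed

lemma linear_expfam_mean:
  assumes "\<theta> \<in> Theta"
  shows "linear (expfam_mean \<theta>)"
proof (rule linearI)
  show "expfam_mean \<theta> (a + b) = expfam_mean \<theta> a + expfam_mean \<theta> b" for a b
    unfolding expfam_mean_def using assms
    by (simp add: inner_add_left distrib_left integrable_expfam_weight_stat add_divide_distrib)
  show "expfam_mean \<theta> (c *\<^sub>R a) = c *\<^sub>R expfam_mean \<theta> a" for c a
    unfolding expfam_mean_def by (simp add: mult.left_commute)
qed

lemma integral_expfam_dist_affine:
  assumes "\<theta> \<in> Theta"
  shows "(\<integral>y. c + inner d (T y) \<partial>expfam_dist nu h T \<theta>) = c + expfam_mean \<theta> d"
proof -
  have "(\<integral>y. c + inner d (T y) \<partial>expfam_dist nu h T \<theta>)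
      = (\<integral>y. c * (h y * exp (inner \<theta> (T y))) + h y * exp (inner \<theta> (T y)) * inner d (T y) \<partial>nu)
        / expfam_Z \<theta>"
    using assms by (subst integral_expfam_dist) (auto simp: algebra_simps)
  also have "\<dots> = (c * expfam_Z \<theta> + expfam_Z \<theta> * expfam_mean \<theta> d) / expfam_Z \<theta>"
    using assms expfam_Z_pos[OF assms] integrable_expfam_weight_stat[OF assms]
    unfolding expfam_mean_def by (simp add: expfam_Z_def mem_expfam_Theta_iff)
  also have "\<dots> = c + expfam_mean \<theta> d"
    using expfam_Z_pos[OF assms] by (simp add: field_simps)
  finally show ?thesis .
qed

lemma ln_expfam_Z_gradient_ineq:
  assumes "\<theta> \<in> Theta" "\<theta>' \<in> Theta"
  shows "ln (expfam_Z \<theta>) + expfam_mean \<theta> (\<theta>' - \<theta>) \<le> ln (expfam_Z \<theta>')"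
proof -
  define E where "E = expfam_mean \<theta> (\<theta>' - \<theta>)"
  let ?w = "\<lambda>y. h y * exp (inner \<theta> (T y))" and ?x = "\<lambda>y. inner (\<theta>' - \<theta>) (T y)"
  have "(\<integral>y. exp E * (?w y + ?w y * ?x y - E * ?w y) \<partial>nu) \<le> (\<integral>y. h y * exp (inner \<theta>' (T y)) \<partial>nu)"
  proof (rule integral_mono)
    fix y assume "y \<in> space nu"
    have "exp E * (1 + (?x y - E)) \<le> exp E * exp (?x y - E)"
      by (intro mult_left_mono exp_ge_add_one_self) auto
    then have "?w y * (exp E * (1 + (?x y - E))) \<le> ?w y * exp (?x y)"
      using h_nonneg \<open>y \<in> space nu\<close> by (intro mult_left_mono) (auto simp: exp_diff)
    then show "exp E * (?w y + ?w y * ?x y - E * ?w y) \<le> h y * exp (inner \<theta>' (T y))"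
      by (simp add: algebra_simps inner_diff_left exp_diff)
  qed (use assms in \<open>auto simp: mem_expfam_Theta_iff integrable_expfam_weight_stat\<close>)
  also have "(\<integral>y. exp E * (?w y + ?w y * ?x y - E * ?w y) \<partial>nu) = exp E * expfam_Z \<theta>"
    using assms expfam_Z_pos[OF assms(1)] unfolding E_def expfam_mean_def
    by (simp add: expfam_Z_def mem_expfam_Theta_iff integrable_expfam_weight_stat)
  finally have "ln (exp E * expfam_Z \<theta>) \<le> ln (expfam_Z \<theta>')"
    using expfam_Z_pos assms by (simp add: expfam_Z_def)
  then show ?thesis
    using expfam_Z_pos[OF assms(1)] by (simp add: ln_mult E_def)
qed

lemma KL_expfam_dist:
  assumes "\<theta> \<in> Theta" "\<theta>0 \<in> Theta"
  shows "KL (expfam_dist nu h T \<theta>) (expfam_dist nu h T \<theta>0)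
    = expfam_mean \<theta> (\<theta> - \<theta>0) - ln (expfam_Z \<theta>) + ln (expfam_Z \<theta>0)"
proof -
  let ?f = "expfam_density nu h T \<theta>0" and ?g = "expfam_density nu h T \<theta>"
  have Z: "0 < expfam_Z \<theta>" "0 < expfam_Z \<theta>0"
    using expfam_Z_pos assms by auto
  have "KL (expfam_dist nu h T \<theta>) (expfam_dist nu h T \<theta>0) = (\<integral>y. ?g y * ln (?g y / ?f y) \<partial>nu)"
    unfolding KL_def expfam_dist_def using Z expfam_density_nonneg integrable_expfam_density[OF assms(2)]
    by (subst KL_density_density_of_integrable)
       (auto simp: expfam_density_eq assms log_ln[symmetric] h_nonneg intro!: AE_I2)
  also have "\<dots> = (\<integral>y. ?g y * ((ln (expfam_Z \<theta>0) - ln (expfam_Z \<theta>)) + inner (\<theta> - \<theta>0) (T y)) \<partial>nu)"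
  proof (rule Bochner_Integration.integral_cong[OF refl])
    fix y assume "y \<in> space nu"
    show "?g y * ln (?g y / ?f y) = ?g y * ((ln (expfam_Z \<theta>0) - ln (expfam_Z \<theta>)) + inner (\<theta> - \<theta>0) (T y))"
    proof (cases "h y = 0")
      case False
      then have "0 < h y"
        using h_nonneg \<open>y \<in> space nu\<close> by (simp add: order_less_le)
      then have "?g y / ?f y = exp (inner (\<theta> - \<theta>0) (T y)) * (expfam_Z \<theta>0 / expfam_Z \<theta>)"
        using Z by (simp add: expfam_density_eq assms inner_diff_left exp_diff field_simps)
      then show ?thesis
        using Z by (simp add: ln_mult ln_div)
    qed (simp add: expfam_density_eq assms)
  qed
  also have "\<dots> = (\<integral>y. (ln (expfam_Z \<theta>0) - ln (expfam_Z \<theta>)) + inner (\<theta> - \<theta>0) (T y) \<partial>expfam_dist nu h T \<theta>)"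
    unfolding expfam_dist_def using expfam_density_nonneg by (subst integral_density) auto
  also have "\<dots> = ln (expfam_Z \<theta>0) - ln (expfam_Z \<theta>) + expfam_mean \<theta> (\<theta> - \<theta>0)"
    by (rule integral_expfam_dist_affine[OF assms(1)])
  finally show ?thesis by simp
qed

lemma convex_expfam_Theta: "convex Theta"
proof (rule convexI)
  fix x y :: 'p and u v :: real
  assume "x \<in> Theta" "y \<in> Theta" "0 \<le> u" "0 \<le> v" "u + v = 1"
  have "integrable nu (\<lambda>z. u * (h z * exp (inner x (T z))) + v * (h z * exp (inner y (T z))))"
    using \<open>x \<in> Theta\<close> \<open>y \<in> Theta\<close> by (auto simp: mem_expfam_Theta_iff)
  then show "u *\<^sub>R x + v *\<^sub>R y \<in> Theta"
    unfolding mem_expfam_Theta_iff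
  proof (rule Bochner_Integration.integrable_bound)
    show "AE z in nu. norm (h z * exp (inner (u *\<^sub>R x + v *\<^sub>R y) (T z)))
        \<le> norm (u * (h z * exp (inner x (T z))) + v * (h z * exp (inner y (T z))))"
    proof (rule AE_I2)
      fix z assume "z \<in> space nu"
      then have "0 \<le> h z" using h_nonneg by auto
      have "u = 1 - v"
        using \<open>u + v = 1\<close> by simp
      then have "exp (u * inner x (T z) + v * inner y (T z)) \<le> u * exp (inner x (T z)) + v * exp (inner y (T z))"
        using convex_onD[OF exp_convex, of v "inner x (T z)" "inner y (T z)"] \<open>0 \<le> u\<close> \<open>0 \<le> v\<close>
        by simp
      then have "h z * exp (u * inner x (T z) + v * inner y (T z))
          \<le> h z * (u * exp (inner x (T z)) + v * exp (inner y (T z)))"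
        using \<open>0 \<le> h z\<close> by (rule mult_left_mono)
      then show "norm (h z * exp (inner (u *\<^sub>R x + v *\<^sub>R y) (T z)))
          \<le> norm (u * (h z * exp (inner x (T z))) + v * (h z * exp (inner y (T z))))"
        using \<open>0 \<le> h z\<close> \<open>0 \<le> u\<close> \<open>0 \<le> v\<close> by (simp add: inner_add_left algebra_simps)
    qed
  qed measurable
qed

lemma convex_on_ln_expfam_Z: "convex_on Theta (\<lambda>\<theta>. ln (expfam_Z \<theta>))"
proof (rule convex_onI[OF _ convex_expfam_Theta])
  fix t :: real and x y :: 'p
  assume "0 < t" "t < 1" "x \<in> Theta" "y \<in> Theta"
  define z where "z = (1 - t) *\<^sub>R x + t *\<^sub>R y"
  have "z \<in> Theta"
    using convex_expfam_Theta \<open>x \<in> Theta\<close> \<open>y \<in> Theta\<close> \<open>0 < t\<close> \<open>t < 1\<close>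
    unfolding z_def by (simp add: convex_alt)
  have "(1 - t) * expfam_mean z (x - z) + t * expfam_mean z (y - z)
      = expfam_mean z ((1 - t) *\<^sub>R (x - z) + t *\<^sub>R (y - z))"
    using linear_expfam_mean[OF \<open>z \<in> Theta\<close>] by (simp add: linear_add linear_scale)
  also have "(1 - t) *\<^sub>R (x - z) + t *\<^sub>R (y - z) = 0"
    unfolding z_def by (simp add: algebra_simps)
  finally have "(1 - t) * expfam_mean z (x - z) + t * expfam_mean z (y - z) = 0"
    using linear_0[OF linear_expfam_mean[OF \<open>z \<in> Theta\<close>]] by simp
  moreover have "(1 - t) * (ln (expfam_Z z) + expfam_mean z (x - z)) + t * (ln (expfam_Z z) + expfam_mean z (y - z))
      \<le> (1 - t) * ln (expfam_Z x) + t * ln (expfam_Z y)"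
    using ln_expfam_Z_gradient_ineq[OF \<open>z \<in> Theta\<close>] \<open>x \<in> Theta\<close> \<open>y \<in> Theta\<close> \<open>0 < t\<close> \<open>t < 1\<close>
    by (intro add_mono mult_left_mono) auto
  ultimately show "ln (expfam_Z ((1 - t) *\<^sub>R x + t *\<^sub>R y)) \<le> (1 - t) * ln (expfam_Z x) + t * ln (expfam_Z y)"
    unfolding z_def[symmetric] by (simp add: algebra_simps)
qed

lemma isCont_expfam_Z_line:
  assumes "a + t0 *\<^sub>R d \<in> Theta"
  shows "isCont (\<lambda>t. expfam_Z (a + t *\<^sub>R d)) t0"
proof -
  obtain r where "0 < r" and near:
      "\<And>t. \<bar>t - t0\<bar> < r \<Longrightarrow> integrable nu (\<lambda>y. h y * exp (inner a (T y)) * exp (t * inner d (T y)))"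
    using expfam_line_integrable_near[OF assms] by blast
  have "isCont (\<lambda>t. \<integral>y. h y * exp (inner a (T y)) * exp (t * inner d (T y)) \<partial>nu) t0"
    using h_nonneg by (intro isCont_integral_mult_exp[OF _ _ _ \<open>0 < r\<close> near]) auto
  then show ?thesis
    by (simp add: expfam_Z_def expfam_weight_line)
qed

lemma isCont_expfam_mean_line:
  assumes "a + t0 *\<^sub>R d \<in> Theta"
  shows "isCont (\<lambda>t. expfam_mean (a + t *\<^sub>R d) d) t0"
proof -
  obtain r where "0 < r" and near:
      "\<And>t. \<bar>t - t0\<bar> < r \<Longrightarrow> integrable nu (\<lambda>y. h y * exp (inner a (T y)) * exp (t * inner d (T y)))"
    using expfam_line_integrable_near[OF assms] by blast
  have "isCont (\<lambda>t. \<integral>y. h y * exp (inner a (T y)) * exp (t * inner d (T y)) * inner d (T y) \<partial>nu) t0"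
    using h_nonneg by (intro isCont_integral_mult_exp_mult[OF _ _ _ \<open>0 < r\<close> near]) auto
  then have "isCont (\<lambda>t. (\<integral>y. h y * exp (inner (a + t *\<^sub>R d) (T y)) * inner d (T y) \<partial>nu)
      / expfam_Z (a + t *\<^sub>R d)) t0"
    using isCont_expfam_Z_line[OF assms] expfam_Z_pos[OF assms]
    by (intro isCont_divide) (auto simp: expfam_weight_line)
  then show ?thesis
    unfolding expfam_mean_def .
qed

lemma expfam_line_closed:
  assumes "0 < t'"
    and below: "\<And>t. 0 \<le> t \<Longrightarrow> t < t' \<Longrightarrow> a + t *\<^sub>R d \<in> Theta \<and> ln (expfam_Z (a + t *\<^sub>R d)) \<le> B"
  shows "a + t' *\<^sub>R d \<in> Theta"
proof -
  define X where "X n = t' - t' * inverse (real (Suc n))" for n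
  have X: "0 \<le> X n" "X n < t'" for n
    using \<open>0 < t'\<close> by (auto simp: X_def field_simps)
  have "X \<longlonglongrightarrow> t' - t' * 0"
    unfolding X_def by (intro tendsto_intros LIMSEQ_inverse_real_of_nat)
  then have lim: "X \<longlonglongrightarrow> t'"
    by simp
  have bound: "(\<integral>\<^sup>+ y. ennreal (h y * exp (inner (a + X n *\<^sub>R d) (T y))) \<partial>nu) \<le> ennreal (exp B)" for n
  proof -
    have "a + X n *\<^sub>R d \<in> Theta" "ln (expfam_Z (a + X n *\<^sub>R d)) \<le> B"
      using below X by auto
    moreover from this have "expfam_Z (a + X n *\<^sub>R d) \<le> exp B"
      using expfam_Z_pos by (metis exp_le_cancel_iff exp_ln)
    ultimately show ?thesis
      by (simp add: nn_integral_expfam_weight ennreal_leI)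
  qed
  have "(\<integral>\<^sup>+ y. ennreal (h y * exp (inner (a + t' *\<^sub>R d) (T y))) \<partial>nu) \<le> ennreal (exp B)"
    by (rule nn_integral_le_of_tendsto_param[where f = "\<lambda>t y. h y * exp (inner (a + t *\<^sub>R d) (T y))",
          OF _ lim _ bound]) (auto intro!: continuous_intros)
  then show ?thesis
    unfolding expfam_Theta_def by (simp add: le_less_trans)
qed

lemma expected_expfam_loss:
  assumes "\<theta> \<in> Theta"
  shows "(\<integral>y. p - inner (T y) v \<partial>expfam_dist nu h T \<theta>) = p - expfam_mean \<theta> v"
  using integral_expfam_dist_affine[OF assms, of p "- v"] linear_neg[OF linear_expfam_mean[OF assms]]
  by (simp add: inner_commute)

lemma expfam_weak_duality:
  assumes "\<theta>0 \<in> Theta" "\<theta> \<in> Theta"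
    and KL: "KL (expfam_dist nu h T \<theta>) (expfam_dist nu h T \<theta>0) \<le> \<rho>"
    and "0 < \<gamma>" and tilted: "\<theta>0 - (1 / \<gamma>) *\<^sub>R v \<in> Theta"
  shows "- expfam_mean \<theta> v \<le> \<gamma> * (\<rho> - ln (expfam_Z \<theta>0) + ln (expfam_Z (\<theta>0 - (1 / \<gamma>) *\<^sub>R v)))"
proof -
  have "\<theta>0 - (1 / \<gamma>) *\<^sub>R v - \<theta> = - (\<theta> - \<theta>0) - (1 / \<gamma>) *\<^sub>R v"
    by (simp add: algebra_simps)
  then have "expfam_mean \<theta> (\<theta>0 - (1 / \<gamma>) *\<^sub>R v - \<theta>) = - expfam_mean \<theta> (\<theta> - \<theta>0) - expfam_mean \<theta> v / \<gamma>"
    using linear_expfam_mean[OF \<open>\<theta> \<in> Theta\<close>] by (simp add: linear_diff linear_neg linear_scale)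
  then have "- expfam_mean \<theta> v / \<gamma> \<le> \<rho> - ln (expfam_Z \<theta>0) + ln (expfam_Z (\<theta>0 - (1 / \<gamma>) *\<^sub>R v))"
    using ln_expfam_Z_gradient_ineq[OF \<open>\<theta> \<in> Theta\<close> tilted] KL KL_expfam_dist[OF \<open>\<theta> \<in> Theta\<close> \<open>\<theta>0 \<in> Theta\<close>]
    by linarith
  from mult_left_mono[OF this less_imp_le[OF \<open>0 < \<gamma>\<close>]] show ?thesis
    using \<open>0 < \<gamma>\<close> by simp
qed

lemma closed_convex_line_fun_expfam:
  assumes "\<theta>0 \<in> Theta"
  shows "closed_convex_line_fun {t. \<theta>0 + t *\<^sub>R d \<in> Theta}
    (\<lambda>t. ln (expfam_Z (\<theta>0 + t *\<^sub>R d)) - ln (expfam_Z \<theta>0)) (\<lambda>t. expfam_mean (\<theta>0 + t *\<^sub>R d) d)"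
proof
  show "open {t. \<theta>0 + t *\<^sub>R d \<in> Theta}"
    by (rule open_expfam_line)
  show "convex {t. \<theta>0 + t *\<^sub>R d \<in> Theta}"
    using convex_expfam_Theta by (rule convex_line_preimage)
  show "0 \<in> {t. \<theta>0 + t *\<^sub>R d \<in> Theta}"
    using assms by simp
  show "ln (expfam_Z (\<theta>0 + 0 *\<^sub>R d)) - ln (expfam_Z \<theta>0) = 0"
    by simp
  show "(ln (expfam_Z (\<theta>0 + t *\<^sub>R d)) - ln (expfam_Z \<theta>0)) + (s - t) * expfam_mean (\<theta>0 + t *\<^sub>R d) d
      \<le> ln (expfam_Z (\<theta>0 + s *\<^sub>R d)) - ln (expfam_Z \<theta>0)"
    if "s \<in> {t. \<theta>0 + t *\<^sub>R d \<in> Theta}" "t \<in> {t. \<theta>0 + t *\<^sub>R d \<in> Theta}" for s t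
  proof -
    have "(\<theta>0 + s *\<^sub>R d) - (\<theta>0 + t *\<^sub>R d) = (s - t) *\<^sub>R d"
      by (simp add: algebra_simps)
    then show ?thesis
      using that ln_expfam_Z_gradient_ineq[of "\<theta>0 + t *\<^sub>R d" "\<theta>0 + s *\<^sub>R d"]
        linear_scale[OF linear_expfam_mean[of "\<theta>0 + t *\<^sub>R d"]]
      by simp
  qed
  show "continuous_on {t. \<theta>0 + t *\<^sub>R d \<in> Theta} (\<lambda>t. expfam_mean (\<theta>0 + t *\<^sub>R d) d)"
    by (intro continuous_at_imp_continuous_on ballI isCont_expfam_mean_line) simp
  show "continuous_on {t. \<theta>0 + t *\<^sub>R d \<in> Theta} (\<lambda>t. ln (expfam_Z (\<theta>0 + t *\<^sub>R d)) - ln (expfam_Z \<theta>0))"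
    by (intro continuous_at_imp_continuous_on ballI continuous_intros isCont_expfam_Z_line)
       (auto dest: expfam_Z_pos)
  show "t' \<in> {t. \<theta>0 + t *\<^sub>R d \<in> Theta}"
    if "0 < t'" and "\<And>t. 0 \<le> t \<Longrightarrow> t < t' \<Longrightarrow> t \<in> {t. \<theta>0 + t *\<^sub>R d \<in> Theta}
        \<and> ln (expfam_Z (\<theta>0 + t *\<^sub>R d)) - ln (expfam_Z \<theta>0) \<le> B" for t' B
    using that by (intro CollectI expfam_line_closed[where B = "B + ln (expfam_Z \<theta>0)"]) force+
qed

lemma KL_expfam_dist_line:
  assumes "\<theta>0 \<in> Theta" "\<theta>0 + t *\<^sub>R d \<in> Theta"
  shows "KL (expfam_dist nu h T (\<theta>0 + t *\<^sub>R d)) (expfam_dist nu h T \<theta>0)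
    = t * expfam_mean (\<theta>0 + t *\<^sub>R d) d - (ln (expfam_Z (\<theta>0 + t *\<^sub>R d)) - ln (expfam_Z \<theta>0))"
  using KL_expfam_dist[OF assms(2,1)] linear_scale[OF linear_expfam_mean[OF assms(2)]] by simp

context
  fixes \<theta>0 v :: 'p and \<rho> :: real
  assumes \<theta>0: "\<theta>0 \<in> Theta" and v: "v \<in> Theta"
begin

abbreviation expfam_dual_objective :: "real \<Rightarrow> ereal" where
  "expfam_dual_objective \<gamma> \<equiv> ereal \<gamma> * (ereal \<rho> - expfam_Psi nu h T \<theta>0)
    + ereal \<gamma> * expfam_Psi nu h T (\<theta>0 - (1 / \<gamma>) *\<^sub>R v) + expfam_Psi nu h T v"

abbreviation expfam_worst_case_loss :: ereal where
  "expfam_worst_case_loss \<equiv> SUP Q \<in> cond_ambiguity_set nu h T \<theta>0 \<rho>.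
    ereal (\<integral>y. ln (expfam_Z v) - inner (T y) v \<partial>Q)"

lemma expfam_dual_objective_eq:
  assumes "0 < \<gamma>"
  shows "expfam_dual_objective \<gamma>
    = (if \<theta>0 - (1 / \<gamma>) *\<^sub>R v \<in> Theta
       then ereal (\<gamma> * (\<rho> - ln (expfam_Z \<theta>0) + ln (expfam_Z (\<theta>0 - (1 / \<gamma>) *\<^sub>R v))) + ln (expfam_Z v))
       else \<infinity>)"
proof (cases "\<theta>0 - (1 / \<gamma>) *\<^sub>R v \<in> Theta")
  case True
  then show ?thesis
    using assms \<theta>0 v by (simp add: expfam_Psi_eq algebra_simps)
next
  case False
  then have "expfam_Psi nu h T (\<theta>0 - (1 / \<gamma>) *\<^sub>R v) = \<infinity>"
    by (simp add: expfam_Psi_def)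
  then show ?thesis
    using assms \<theta>0 v False by (simp add: expfam_Psi_eq)
qed

lemma expfam_worst_case_loss_le_dual: "expfam_worst_case_loss \<le> (INF \<gamma> \<in> {0<..}. expfam_dual_objective \<gamma>)"
proof (intro SUP_least INF_greatest)
  fix Q and \<gamma> :: real
  assume "Q \<in> cond_ambiguity_set nu h T \<theta>0 \<rho>" "\<gamma> \<in> {0<..}"
  then obtain \<theta> where Q: "Q = expfam_dist nu h T \<theta>" "\<theta> \<in> Theta"
    and KL: "KL (expfam_dist nu h T \<theta>) (expfam_dist nu h T \<theta>0) \<le> \<rho>"
    unfolding cond_ambiguity_set_def by blast
  show "ereal (\<integral>y. ln (expfam_Z v) - inner (T y) v \<partial>Q) \<le> expfam_dual_objective \<gamma>"
    using expfam_weak_duality[OF \<theta>0 \<open>\<theta> \<in> Theta\<close> KL, of \<gamma> v] \<open>\<gamma> \<in> {0<..}\<close>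
    by (simp add: Q expected_expfam_loss expfam_dual_objective_eq)
qed

lemma expfam_dual_le_worst_case_loss:
  assumes "0 \<le> \<rho>"
  shows "(INF \<gamma> \<in> {0<..}. expfam_dual_objective \<gamma>) \<le> expfam_worst_case_loss"
proof -
  interpret closed_convex_line_fun "{t. \<theta>0 + t *\<^sub>R - v \<in> Theta}"
    "\<lambda>t. ln (expfam_Z (\<theta>0 + t *\<^sub>R - v)) - ln (expfam_Z \<theta>0)" "\<lambda>t. expfam_mean (\<theta>0 + t *\<^sub>R - v) (- v)"
    by (rule closed_convex_line_fun_expfam[OF \<theta>0])
  show ?thesis
  proof (rule inf_dual_le_sup_primal[where p = "ln (expfam_Z v)", OF \<open>0 \<le> \<rho>\<close>])
    fix t :: real
    assume t: "t \<in> {t. \<theta>0 + t *\<^sub>R - v \<in> Theta}" "0 \<le> t"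
      and gap: "t * expfam_mean (\<theta>0 + t *\<^sub>R - v) (- v)
        - (ln (expfam_Z (\<theta>0 + t *\<^sub>R - v)) - ln (expfam_Z \<theta>0)) \<le> \<rho>"
    have "expfam_dist nu h T (\<theta>0 + t *\<^sub>R - v) \<in> cond_ambiguity_set nu h T \<theta>0 \<rho>"
      using t gap KL_expfam_dist_line[OF \<theta>0, of t "- v"]
      unfolding cond_ambiguity_set_def by auto
    moreover have "(\<integral>y. ln (expfam_Z v) - inner (T y) v \<partial>expfam_dist nu h T (\<theta>0 + t *\<^sub>R - v))
        = expfam_mean (\<theta>0 + t *\<^sub>R - v) (- v) + ln (expfam_Z v)"
      using t linear_neg[OF linear_expfam_mean, of "\<theta>0 + t *\<^sub>R - v" v] by (simp add: expected_expfam_loss)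
    ultimately show "ereal (expfam_mean (\<theta>0 + t *\<^sub>R - v) (- v) + ln (expfam_Z v)) \<le> expfam_worst_case_loss"
      by (metis (no_types, lifting) SUP_upper)
  next
    fix \<gamma> :: real
    assume "0 < \<gamma>" "1 / \<gamma> \<in> {t. \<theta>0 + t *\<^sub>R - v \<in> Theta}"
    have "(INF \<gamma> \<in> {0<..}. expfam_dual_objective \<gamma>) \<le> expfam_dual_objective \<gamma>"
      using \<open>0 < \<gamma>\<close> by (intro INF_lower) simp
    also have "\<dots> = ereal (\<gamma> * (\<rho> - ln (expfam_Z \<theta>0) + ln (expfam_Z (\<theta>0 - (1 / \<gamma>) *\<^sub>R v)))
        + ln (expfam_Z v))"
      using expfam_dual_objective_eq[OF \<open>0 < \<gamma>\<close>] \<open>1 / \<gamma> \<in> _\<close> by simp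
    also have "\<dots> = ereal (\<gamma> * \<rho> + \<gamma> * (ln (expfam_Z (\<theta>0 + (1 / \<gamma>) *\<^sub>R - v))
        - ln (expfam_Z \<theta>0)) + ln (expfam_Z v))"
      by (simp add: algebra_simps)
    finally show "(INF \<gamma> \<in> {0<..}. expfam_dual_objective \<gamma>) \<le> ereal (\<gamma> * \<rho> + \<gamma> * (ln (expfam_Z (\<theta>0 + (1 / \<gamma>) *\<^sub>R - v))
        - ln (expfam_Z \<theta>0)) + ln (expfam_Z v))" .
  qed
qed

lemma convex_expfam_dual_objective: "convex_on_ereal {0<..} expfam_dual_objective"
proof (rule convex_on_ereal_extend)
  let ?D = "{\<gamma>. 0 < \<gamma> \<and> \<theta>0 - (1 / \<gamma>) *\<^sub>R v \<in> Theta}"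
  have "convex_on Theta (\<lambda>\<theta>. (\<rho> - ln (expfam_Z \<theta>0)) + ln (expfam_Z \<theta>))"
    using convex_expfam_Theta convex_on_ln_expfam_Z by (intro convex_on_add) (simp_all add: convex_on_const)
  then have "convex_on ?D (\<lambda>\<gamma>. \<gamma> * (\<rho> - ln (expfam_Z \<theta>0) + ln (expfam_Z (\<theta>0 - (1 / \<gamma>) *\<^sub>R v))))"
    by (rule convex_on_perspective)
  then show "convex_on ?D (\<lambda>\<gamma>. \<gamma> * (\<rho> - ln (expfam_Z \<theta>0) + ln (expfam_Z (\<theta>0 - (1 / \<gamma>) *\<^sub>R v)))
      + ln (expfam_Z v))"
    by (intro convex_on_add) (simp_all add: convex_on_const convex_on_imp_convex)
qed (auto simp: expfam_dual_objective_eq)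

end

end

theorem proposition3p2:
  fixes nu :: "'y::euclidean_space measure"
    and h :: "'y \<Rightarrow> real"
    and T :: "'y \<Rightarrow> 'p::euclidean_space"
    and lam :: "'w::euclidean_space \<Rightarrow> 'x::euclidean_space \<Rightarrow> 'p"
    and W :: "'w set" and X :: "'x set"
    and xhat :: 'x and w :: 'w and thetahat :: 'p and rho :: real
  assumes h_meas: "h \<in> borel_measurable nu"
    and h_nonneg: "\<forall>y\<in>space nu. 0 \<le> h y"
    and T_meas: "T \<in> borel_measurable nu"
    and regular: "expfam_regular nu h T"
    and lam_range: "\<forall>w'\<in>W. \<forall>x\<in>X. lam w' x \<in> expfam_Theta nu h T"
    and lam_cont: "continuous_on (W \<times> X) (\<lambda>(w', x). lam w' x)"
    and xhat: "xhat \<in> X" and w: "w \<in> W"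
    and thetahat: "thetahat \<in> expfam_Theta nu h T"
    and rho: "0 \<le> rho"
  shows "let G = (\<lambda>\<gamma>::real.
             ereal \<gamma> * (ereal rho - expfam_Psi nu h T thetahat)
           + ereal \<gamma> * expfam_Psi nu h T (thetahat - (1 / \<gamma>) *\<^sub>R lam w xhat)
           + expfam_Psi nu h T (lam w xhat))
         in (SUP Q \<in> cond_ambiguity_set nu h T thetahat rho.
               ereal (\<integral>y. expfam_logloss nu h T lam xhat y w \<partial>Q))
            = (INF \<gamma> \<in> {0<..}. G \<gamma>)
          \<and> convex_on_ereal {0<..} G"
proof -
  note family = h_meas h_nonneg T_meas regular
  have v: "lam w xhat \<in> expfam_Theta nu h T"
    using lam_range xhat w by blast
  have Psi: "real_of_ereal (expfam_Psi nu h T (lam w xhat)) = ln (expfam_Z nu h T (lam w xhat))"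
    using expfam_Psi_eq[OF family v] by simp
  show ?thesis
    unfolding expfam_logloss_def Let_def Psi
    by (intro conjI antisym expfam_worst_case_loss_le_dual[OF family thetahat v]
        expfam_dual_le_worst_case_loss[OF family thetahat v rho]
        convex_expfam_dual_objective[OF family thetahat v])
qed

end
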